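(* Let $n\ge 3$, $0<m<\frac{n-2}{n}$, $\rho>0$, and let $\alpha,\beta$ satisfy $\alpha=\frac{2\beta+\rho}{1-m}$, $\beta>\frac{m\rho}{n-2-mn}$, and $\alpha>n\beta$. Let $v$ be a radially symmetric solution of $$\frac{n-1}{m}\Delta v^m+\alpha v+\beta x\cdot\nabla v=0,\quad v>0,\quad\text{in }\mathbb{R}^n,$$ let $w(r)=r^2v(r)^{1-m}$ and $w_\infty=\frac{2(n-1)(n(1-m)-2)}{(1-m)(\alpha(1-m)-2\beta)}$. Then there exists a constant $\varepsilon\in(0,\min(1,w_\infty/2))$ such that for every $R_0>1$ there exists $r'>R_0$ with $w(r')\ge\varepsilon$.
   Context: $v(r)$ denotes the value of the radially symmetric function $v$ at any point with $|x|=r$. *)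

theory Defs
  imports "HOL-Analysis.Analysis"
begin

definition pd :: "('a::euclidean_space \<Rightarrow> real) \<Rightarrow> 'a \<Rightarrow> 'a \<Rightarrow> real" where
  "pd f i x = deriv (\<lambda>t. f (x + t *\<^sub>R i)) 0"

definition laplacian :: "('a::euclidean_space \<Rightarrow> real) \<Rightarrow> 'a \<Rightarrow> real" where
  "laplacian f x = (\<Sum>i\<in>Basis. pd (pd f i) i x)"

definition grad :: "('a::euclidean_space \<Rightarrow> real) \<Rightarrow> 'a \<Rightarrow> 'a" where
  "grad f x = (\<Sum>i\<in>Basis. pd f i x *\<^sub>R i)"

definition C2 :: "('a::euclidean_space \<Rightarrow> real) \<Rightarrow> bool" where
  "C2 f \<longleftrightarrow> (\<forall>x. f differentiable at x) \<and>
     (\<forall>i\<in>Basis. \<forall>x. pd f i differentiable at x) \<and>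
     (\<forall>i\<in>Basis. \<forall>j\<in>Basis. continuous_on UNIV (pd (pd f i) j))"

definition radially_symmetric :: "('a::euclidean_space \<Rightarrow> real) \<Rightarrow> bool" where
  "radially_symmetric f \<longleftrightarrow> (\<forall>x y. norm x = norm y \<longrightarrow> f x = f y)"

definition radval :: "('a::euclidean_space \<Rightarrow> real) \<Rightarrow> real \<Rightarrow> real" where
  "radval f r = f (r *\<^sub>R (SOME e. e \<in> (Basis::'a set)))"

end

theory Submission
  imports Defs
begin

text \<open>Along a ray, \<open>v\<close> and \<open>v\<^sup>m\<close> have profiles \<open>g\<close> and \<open>h = g\<^sup>m\<close> satisfying the radial ODE
  \<open>(n - 1)/m (h'' + (n - 1) h'/r) + \<alpha> g + \<beta> r g' = 0\<close>. At a first root of the flux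
  \<open>\<alpha> g + \<beta> r g'\<close> its derivative would be \<open>g' (m\<alpha> - (n - 2)\<beta>) > 0\<close>, so the flux stays positive,
  i.e. the elasticity \<open>r g'/g\<close> exceeds \<open>-\<alpha>/\<beta>\<close>. Multiplying the ODE by \<open>r\<^sup>n\<^sup>-\<^sup>1\<close> and integrating
  expresses the mass \<open>M r = \<integral>\<^sub>0\<^sup>r s\<^sup>n\<^sup>-\<^sup>1 g s ds\<close> through \<open>h'\<close> and \<open>g\<close>; for \<open>z = M/(r\<^sup>n\<^sup>-\<^sup>2 h)\<close> this
  gives \<open>(\<alpha> - n\<beta>) z = -(n - 1) r g'/g - \<beta> w\<close> and \<open>r z' \<le> w - \<delta> z\<close> with \<open>\<delta> = n - 2 - m\<alpha>/\<beta> > 0\<close>.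
  If \<open>w = r\<^sup>2 g\<^sup>1\<^sup>-\<^sup>m\<close> stayed below a suitable \<open>\<epsilon>\<close>, the inequality would force \<open>z < 2\<epsilon>/\<delta>\<close>, the
  identity would then give \<open>r g'/g > -1/(1 - m)\<close>, and so \<open>w\<close> would be eventually increasing:
  impossible for a positive function that is eventually below every positive constant.\<close>

lemma pd_along_line:
  fixes f :: "'a::euclidean_space \<Rightarrow> real"
  shows "pd f e (r *\<^sub>R e) = deriv (\<lambda>s. f (s *\<^sub>R e)) r"
proof -
  have "pd f e (r *\<^sub>R e) = deriv ((\<lambda>s. f (s *\<^sub>R e)) \<circ> (\<lambda>t. r + t)) 0"
    unfolding pd_def by (simp add: o_def scaleR_add_left)
  also have "\<dots> = deriv (\<lambda>s. f (s *\<^sub>R e)) r" by (rule deriv_shift_0[symmetric])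
  finally show ?thesis .
qed

lemma has_real_derivative_along_line:
  fixes f :: "'a::euclidean_space \<Rightarrow> real"
  assumes "f differentiable at (r *\<^sub>R e)"
  shows "((\<lambda>s. f (s *\<^sub>R e)) has_real_derivative deriv (\<lambda>s. f (s *\<^sub>R e)) r) (at r)"
proof -
  have "(\<lambda>s. s *\<^sub>R e) differentiable at r"
    by (auto intro!: derivative_intros)
  with assms have "(f \<circ> (\<lambda>s. s *\<^sub>R e)) differentiable at r"
    using differentiable_chain_at by blast
  then show ?thesis unfolding DERIV_deriv_iff_real_differentiable by (simp add: o_def)
qed

lemma second_deriv_radial_transverse:
  fixes h h' :: "real \<Rightarrow> real"
  assumes h_deriv: "\<And>r. (h has_real_derivative h' r) (at r)"
    and h'_cont: "continuous_on UNIV h'"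
    and "r > 0"
  shows "deriv (\<lambda>t. deriv (\<lambda>s. h (sqrt (r\<^sup>2 + (t + s)\<^sup>2))) 0) 0 = h' r / r"
proof -
  define \<rho> where "\<rho> t = sqrt (r\<^sup>2 + t\<^sup>2)" for t
  have \<rho>_pos: "\<rho> t > 0" for t
    unfolding \<rho>_def using \<open>r > 0\<close> by (simp add: add_pos_nonneg)
  have \<rho>_deriv: "(\<rho> has_real_derivative t / \<rho> t) (at t)" for t
  proof -
    have "r\<^sup>2 + t\<^sup>2 > 0" using \<open>r > 0\<close> by (simp add: add_pos_nonneg)
    then show ?thesis unfolding \<rho>_def
      by (auto intro!: derivative_eq_intros simp: field_simps power2_eq_square)
  qed
  have inner: "deriv (\<lambda>s. h (sqrt (r\<^sup>2 + (t + s)\<^sup>2))) 0 = h' (\<rho> t) * t / \<rho> t" for t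
  proof -
    have "deriv (\<lambda>s. h (sqrt (r\<^sup>2 + (t + s)\<^sup>2))) 0 = deriv ((\<lambda>t. h (\<rho> t)) \<circ> (\<lambda>s. t + s)) 0"
      unfolding \<rho>_def by (simp add: o_def)
    also have "\<dots> = deriv (\<lambda>t. h (\<rho> t)) t" by (rule deriv_shift_0[symmetric])
    also have "\<dots> = h' (\<rho> t) * (t / \<rho> t)"
      by (rule DERIV_imp_deriv[OF DERIV_chain2[OF h_deriv \<rho>_deriv]])
    finally show ?thesis by simp
  qed
  define G where "G t = h' (\<rho> t) / \<rho> t" for t
  have "isCont \<rho> 0" using \<rho>_deriv DERIV_isCont by blast
  moreover have "isCont h' (\<rho> 0)" using h'_cont by (simp add: continuous_on_eq_continuous_at)
  ultimately have "isCont (\<lambda>t. h' (\<rho> t)) 0" by (rule isCont_o2)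
  then have "isCont G 0"
    unfolding G_def using \<open>isCont \<rho> 0\<close> \<rho>_pos[of 0] by (intro isCont_divide) auto
  \<comment> \<open>Carath\'eodory's characterisation: \<open>G t * t\<close> has derivative \<open>G 0\<close> at 0.\<close>
  then have "((\<lambda>t. h' (\<rho> t) * t / \<rho> t) has_real_derivative G 0) (at 0)"
    unfolding CARAT_DERIV by (intro exI[of _ G]) (auto simp: G_def)
  moreover have "G 0 = h' r / r" unfolding G_def \<rho>_def using \<open>r > 0\<close> by simp
  ultimately show ?thesis unfolding inner using DERIV_imp_deriv by metis
qed

lemma second_pd_radial_transverse:
  fixes u :: "'a::euclidean_space \<Rightarrow> real" and h h' :: "real \<Rightarrow> real"
  assumes e: "e \<in> Basis" and i: "i \<in> Basis" "i \<noteq> e"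
    and radial: "\<And>y. u y = h (norm y)"
    and h_deriv: "\<And>r. (h has_real_derivative h' r) (at r)"
    and h'_cont: "continuous_on UNIV h'"
    and "r > 0"
  shows "pd (pd u i) i (r *\<^sub>R e) = h' r / r"
proof -
  have norm_eq: "norm (r *\<^sub>R e + t *\<^sub>R i) = sqrt (r\<^sup>2 + t\<^sup>2)" for t
  proof -
    have "i \<bullet> e = 0" using i e by (simp add: inner_Basis)
    then have "(r *\<^sub>R e + t *\<^sub>R i) \<bullet> (r *\<^sub>R e + t *\<^sub>R i) = r\<^sup>2 + t\<^sup>2"
      using e i by (simp add: inner_add_left inner_add_right inner_commute power2_eq_square)
    then show ?thesis by (simp add: norm_eq_sqrt_inner)
  qed
  have "pd u i (r *\<^sub>R e + t *\<^sub>R i) = deriv (\<lambda>s. h (sqrt (r\<^sup>2 + (t + s)\<^sup>2))) 0" for t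
  proof -
    have "u (r *\<^sub>R e + t *\<^sub>R i + s *\<^sub>R i) = h (sqrt (r\<^sup>2 + (t + s)\<^sup>2))" for s
      using radial norm_eq[of "t + s"] by (simp add: scaleR_add_left add.assoc)
    then show ?thesis unfolding pd_def by simp
  qed
  then have "pd (pd u i) i (r *\<^sub>R e) = deriv (\<lambda>t. deriv (\<lambda>s. h (sqrt (r\<^sup>2 + (t + s)\<^sup>2))) 0) 0"
    unfolding pd_def[of "pd u i"] by simp
  also have "\<dots> = h' r / r"
    by (rule second_deriv_radial_transverse[OF h_deriv h'_cont \<open>r > 0\<close>])
  finally show ?thesis .
qed

lemma laplacian_radial:
  fixes u :: "'a::euclidean_space \<Rightarrow> real" and h :: "real \<Rightarrow> real"
  assumes e: "e \<in> Basis"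
    and on_ray: "\<And>s. u (s *\<^sub>R e) = h s"
    and radial: "\<And>y. u y = h (norm y)"
    and h_deriv: "\<And>r. (h has_real_derivative deriv h r) (at r)"
    and h'_deriv: "\<And>r. (deriv h has_real_derivative deriv (deriv h) r) (at r)"
    and "r > 0"
  shows "laplacian u (r *\<^sub>R e) = deriv (deriv h) r + (real DIM('a) - 1) * deriv h r / r"
proof -
  have "deriv h = (\<lambda>s. pd u e (s *\<^sub>R e))"
    using pd_along_line[of u e] on_ray by simp
  then have radial_dir: "pd (pd u e) e (r *\<^sub>R e) = deriv (deriv h) r"
    unfolding pd_along_line by simp
  have "continuous_on UNIV (deriv h)"
    using h'_deriv by (meson DERIV_isCont continuous_at_imp_continuous_on)
  then have transverse_dir: "pd (pd u i) i (r *\<^sub>R e) = deriv h r / r"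
    if "i \<in> Basis" "i \<noteq> e" for i
    using second_pd_radial_transverse[OF e that radial h_deriv _ \<open>r > 0\<close>] by blast
  have "laplacian u (r *\<^sub>R e) = pd (pd u e) e (r *\<^sub>R e) + (\<Sum>i\<in>Basis - {e}. pd (pd u i) i (r *\<^sub>R e))"
    unfolding laplacian_def using e by (simp add: sum.remove)
  also have "(\<Sum>i\<in>Basis - {e}. pd (pd u i) i (r *\<^sub>R e)) = (\<Sum>i\<in>Basis - {e}. deriv h r / r)"
    using transverse_dir by (intro sum.cong) auto
  also have "\<dots> = (real DIM('a) - 1) * deriv h r / r"
    using e by (simp add: card_Diff_singleton of_nat_diff)
  finally show ?thesis unfolding radial_dir by simp
qed

lemma inner_grad_on_ray:
  fixes v :: "'a::euclidean_space \<Rightarrow> real"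
  assumes e: "e \<in> Basis" and on_ray: "\<And>s. v (s *\<^sub>R e) = g s"
  shows "(r *\<^sub>R e) \<bullet> grad v (r *\<^sub>R e) = r * deriv g r"
proof -
  have "(r *\<^sub>R e) \<bullet> grad v (r *\<^sub>R e) = (\<Sum>i\<in>Basis. pd v i (r *\<^sub>R e) * (r *\<^sub>R e \<bullet> i))"
    unfolding grad_def by (simp add: inner_sum_right)
  also have "\<dots> = (\<Sum>i\<in>Basis. if i = e then pd v e (r *\<^sub>R e) * r else 0)"
    using e by (intro sum.cong) (auto simp: inner_Basis)
  also have "\<dots> = pd v e (r *\<^sub>R e) * r" using e by simp
  finally show ?thesis
    unfolding pd_along_line on_ray by simp
qed

lemma radial_profile_ode:
  fixes v :: "'a::euclidean_space \<Rightarrow> real" and m \<alpha> \<beta> :: real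
  assumes v_rad: "radially_symmetric v"
    and v_C2: "C2 v"
    and vm_C2: "C2 (\<lambda>x. v x powr m)"
    and eqn: "\<forall>x. (real DIM('a) - 1) / m * laplacian (\<lambda>y. v y powr m) x + \<alpha> * v x
                    + \<beta> * (x \<bullet> grad v x) = 0"
  defines "g \<equiv> radval v" and "h \<equiv> \<lambda>r. radval v r powr m"
  shows "(g has_real_derivative deriv g r) (at r)"
    and "(h has_real_derivative deriv h r) (at r)"
    and "(deriv h has_real_derivative deriv (deriv h) r) (at r)"
    and "r > 0 \<Longrightarrow> (real DIM('a) - 1) / m * (deriv (deriv h) r
            + (real DIM('a) - 1) * deriv h r / r) + \<alpha> * g r + \<beta> * r * deriv g r = 0"
proof -
  define e :: 'a where "e = (SOME e. e \<in> Basis)"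
  have e: "e \<in> Basis" unfolding e_def by (rule someI_ex) (use nonempty_Basis in blast)
  define u where "u y = v y powr m" for y
  have g_ray: "v (s *\<^sub>R e) = g s" and h_ray: "u (s *\<^sub>R e) = h s" for s
    unfolding g_def h_def u_def radval_def e_def by simp_all
  have v_radial: "v y = g (norm y)" for y
  proof -
    have "norm (norm y *\<^sub>R e) = norm y" using e by simp
    then show ?thesis using v_rad g_ray unfolding radially_symmetric_def by metis
  qed
  have u_radial: "u y = h (norm y)" for y
    unfolding u_def h_def using v_radial g_def by simp
  show g_deriv: "(g has_real_derivative deriv g r) (at r)" for r
    using has_real_derivative_along_line[of v r e] v_C2 g_ray unfolding C2_def by simp
  show h_deriv: "(h has_real_derivative deriv h r) (at r)" for r
    using has_real_derivative_along_line[of u r e] vm_C2 h_ray unfolding C2_def u_def by simp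
  have "deriv h = (\<lambda>s. pd u e (s *\<^sub>R e))"
    using pd_along_line[of u e] h_ray by simp
  then show h'_deriv: "(deriv h has_real_derivative deriv (deriv h) r) (at r)" for r
    using has_real_derivative_along_line[of "pd u e" r e] vm_C2 e unfolding C2_def u_def by simp
  assume "r > 0"
  have "(real DIM('a) - 1) / m * laplacian u (r *\<^sub>R e) + \<alpha> * v (r *\<^sub>R e)
          + \<beta> * ((r *\<^sub>R e) \<bullet> grad v (r *\<^sub>R e)) = 0"
    using eqn unfolding u_def by blast
  then show "(real DIM('a) - 1) / m * (deriv (deriv h) r + (real DIM('a) - 1) * deriv h r / r)
             + \<alpha> * g r + \<beta> * r * deriv g r = 0"
    unfolding laplacian_radial[OF e h_ray u_radial h_deriv h'_deriv \<open>r > 0\<close>]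
      inner_grad_on_ray[where g = g, OF e g_ray] g_ray by (simp add: mult.assoc)
qed


lemma positive_if_deriv_positive_at_roots:
  fixes Q Q' :: "real \<Rightarrow> real"
  assumes Q_deriv: "\<And>r. (Q has_real_derivative Q' r) (at r)"
    and Q0: "Q 0 > 0"
    and at_root: "\<And>r. r > 0 \<Longrightarrow> Q r = 0 \<Longrightarrow> Q' r > 0"
    and "r \<ge> 0"
  shows "Q r > 0"
proof (rule ccontr)
  assume "\<not> Q r > 0"
  have cont: "continuous_on A Q" for A
    using Q_deriv by (meson DERIV_isCont continuous_at_imp_continuous_on)
  define Z where "Z = {x \<in> {0..r}. Q x = 0}"
  have "Z \<noteq> {}"
    using IVT2'[of Q r 0 0, OF _ _ _ cont] Q0 \<open>\<not> Q r > 0\<close> \<open>r \<ge> 0\<close> unfolding Z_def by auto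
  moreover have "bdd_below Z" unfolding Z_def by (auto intro: bdd_belowI[of _ 0])
  moreover have "closed Z" unfolding Z_def
    by (rule continuous_closed_preimage_constant[OF cont closed_atLeastAtMost])
  ultimately have "Inf Z \<in> Z" by (rule closed_contains_Inf)
  define r1 where "r1 = Inf Z"
  have r1: "0 \<le> r1" "r1 \<le> r" "Q r1 = 0"
    using \<open>Inf Z \<in> Z\<close> unfolding r1_def Z_def by auto
  then have "r1 > 0" using Q0 by (cases "r1 = 0") auto
  \<comment> \<open>\<open>Q\<close> crosses zero upwards at \<open>r1\<close>, so it is negative just before, and has an earlier root.\<close>
  obtain d where "d > 0" and d: "\<And>t. t > 0 \<Longrightarrow> t < d \<Longrightarrow> Q (r1 - t) < Q r1"
    using DERIV_pos_inc_left[OF Q_deriv at_root[OF \<open>r1 > 0\<close> \<open>Q r1 = 0\<close>]] by blast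
  define t where "t = r1 - min (d / 2) (r1 / 2)"
  have t: "0 \<le> t" "t < r1" "Q t < 0"
    unfolding t_def using d[of "min (d / 2) (r1 / 2)"] \<open>d > 0\<close> \<open>r1 > 0\<close> r1 by auto
  then obtain x where "0 \<le> x" "x \<le> t" "Q x = 0"
    using IVT2'[of Q t 0 0, OF _ _ _ cont] Q0 by auto
  then have "x \<in> Z" using t r1 unfolding Z_def by auto
  then have "r1 \<le> x" unfolding r1_def using \<open>bdd_below Z\<close> by (rule cInf_lower)
  then show False using \<open>x \<le> t\<close> \<open>t < r1\<close> by simp
qed

lemma eventually_less_if_deriv_le_linear:
  fixes z z' :: "real \<Rightarrow> real" and \<delta> \<epsilon> c R :: real
  assumes "\<delta> > 0" "R > 0" "c > \<epsilon> / \<delta>"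
    and z_deriv: "\<And>r. r \<ge> R \<Longrightarrow> (z has_real_derivative z' r) (at r)"
    and z'_le: "\<And>r. r \<ge> R \<Longrightarrow> r * z' r \<le> \<epsilon> - \<delta> * z r"
  shows "\<forall>\<^sub>F r in at_top. z r < c"
proof -
  \<comment> \<open>The integrating factor \<open>r powr \<delta>\<close> turns the inequality into monotonicity of \<open>F\<close>.\<close>
  define F where "F r = r powr \<delta> * (z r - \<epsilon> / \<delta>)" for r
  have F_deriv: "(F has_real_derivative r powr (\<delta> - 1) * (\<delta> * z r - \<epsilon> + r * z' r)) (at r)"
    if "r \<ge> R" for r
  proof -
    have "r > 0" using that \<open>R > 0\<close> by simp
    then have "(F has_real_derivative \<delta> * r powr (\<delta> - 1) * (z r - \<epsilon> / \<delta>) + r powr \<delta> * z' r) (at r)"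
      unfolding F_def by (auto intro!: derivative_eq_intros z_deriv[OF that])
    moreover have "r powr \<delta> = r powr (\<delta> - 1) * r"
      using \<open>r > 0\<close> by (simp add: powr_diff)
    ultimately show ?thesis using \<open>\<delta> > 0\<close> by (simp add: algebra_simps)
  qed
  have F_le: "F r \<le> F R" if "r \<ge> R" for r
  proof (rule DERIV_nonpos_imp_nonincreasing[OF that])
    fix x assume "R \<le> x"
    then show "\<exists>y. (F has_real_derivative y) (at x) \<and> y \<le> 0"
      using F_deriv z'_le[of x] by (intro exI conjI) (auto intro: mult_nonneg_nonpos)
  qed
  have "((\<lambda>r. \<epsilon> / \<delta> + F R * r powr (- \<delta>)) \<longlongrightarrow> \<epsilon> / \<delta> + F R * 0) at_top"
    using \<open>\<delta> > 0\<close> by (intro tendsto_intros tendsto_neg_powr filterlim_ident) auto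
  then have "\<forall>\<^sub>F r in at_top. \<epsilon> / \<delta> + F R * r powr (- \<delta>) < c"
    using \<open>c > \<epsilon> / \<delta>\<close> by (simp add: order_tendstoD(2))
  then show ?thesis using eventually_ge_at_top[of R]
  proof eventually_elim
    case (elim r)
    then have "r > 0" using \<open>R > 0\<close> by simp
    then have "z r = \<epsilon> / \<delta> + F r * r powr (- \<delta>)"
      unfolding F_def by (simp add: powr_minus field_simps)
    also have "\<dots> \<le> \<epsilon> / \<delta> + F R * r powr (- \<delta>)"
      using F_le[OF \<open>r \<ge> R\<close>] by (simp add: mult_right_mono)
    finally show ?case using elim by simp
  qed
qed

locale fast_diffusion_profile =
  fixes n :: nat and m \<alpha> \<beta> :: real and g g' h h' h'' :: "real \<Rightarrow> real"
  assumes n_ge_3: "n \<ge> 3"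
    and m_pos: "m > 0"
    and \<beta>_pos: "\<beta> > 0"
    and \<alpha>_gt: "\<alpha> > real n * \<beta>"
    and m\<alpha>_lt: "m * \<alpha> < (real n - 2) * \<beta>"
    and g_pos: "g r > 0"
    and h_eq: "h r = g r powr m"
    and g_deriv: "(g has_real_derivative g' r) (at r)"
    and h_deriv: "(h has_real_derivative h' r) (at r)"
    and h'_deriv: "(h' has_real_derivative h'' r) (at r)"
    and ode: "r > 0 \<Longrightarrow> (real n - 1) / m * (h'' r + (real n - 1) * h' r / r)
                          + \<alpha> * g r + \<beta> * r * g' r = 0"
begin

lemma m_lt_1: "m < 1"
proof -
  have "m * (real n * \<beta>) < m * \<alpha>" using \<alpha>_gt m_pos by simp
  also have "\<dots> < (real n - 2) * \<beta>" by (rule m\<alpha>_lt)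
  finally have "m * real n < real n - 2" using \<beta>_pos by (simp add: mult.assoc[symmetric])
  then show ?thesis using n_ge_3 by (smt (verit) mult_le_cancel_right1 of_nat_0_le_iff)
qed

lemma \<alpha>_pos: "\<alpha> > 0"
  using \<alpha>_gt \<beta>_pos by (smt (verit) of_nat_0_le_iff zero_le_mult_iff)

lemma power_n_split:
  fixes x :: real
  shows "x ^ n = x * x ^ (n - 1)" "x ^ (n - 1) = x * x ^ (n - 2)" "x ^ (n - 2) = x * x ^ (n - 3)"
  using n_ge_3 by (simp_all add: power_eq_if numeral_2_eq_2 numeral_3_eq_3)

lemma h'_eq: "h' r = m * g r powr (m - 1) * g' r"
proof -
  have "h = (\<lambda>r. g r powr m)" using h_eq by auto
  then have "(h has_real_derivative m * g r powr (m - 1) * g' r) (at r)"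
    using DERIV_fun_powr[OF g_deriv g_pos] by simp
  then show ?thesis using h_deriv DERIV_unique by blast
qed

lemma g'_eq: "g' r = g r powr (1 - m) * h' r / m"
proof -
  have "g r powr (1 - m) * g r powr (m - 1) = 1"
    using g_pos[of r] by (simp add: powr_add[symmetric])
  then show ?thesis
    unfolding h'_eq using m_pos by (simp add: field_simps)
qed

lemma g'_deriv:
  "(g' has_real_derivative (1 - m) * (g' r)\<^sup>2 / g r + g r powr (1 - m) * h'' r / m) (at r)"
proof -
  have "g r powr (1 - m - 1) * g r powr (m - 1) = g r powr (-1)"
    by (simp add: powr_add[symmetric])
  then have "g r powr (1 - m - 1) * g r powr (m - 1) = 1 / g r"
    using g_pos[of r] by (simp add: powr_minus_divide)
  then have "g r powr (1 - m - 1) * h' r = m * g' r / g r"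
    unfolding h'_eq by (simp add: algebra_simps)
  then have "(1 - m) * g r powr (1 - m - 1) * g' r * h' r / m
      = (1 - m) * g' r * (m * g' r / g r) / m"
    by (metis mult.assoc mult.commute)
  also have "\<dots> = (1 - m) * (g' r)\<^sup>2 / g r"
    using m_pos by (simp add: power2_eq_square)
  finally have "(1 - m) * g r powr (1 - m - 1) * g' r * h' r / m = (1 - m) * (g' r)\<^sup>2 / g r" .
  moreover have "((\<lambda>r. g r powr (1 - m) * h' r / m) has_real_derivative
      ((1 - m) * g r powr (1 - m - 1) * g' r * h' r + g r powr (1 - m) * h'' r) / m) (at r)"
    using m_pos
    by (auto intro!: derivative_eq_intros DERIV_fun_powr[where g = g] g_deriv h'_deriv g_pos)
  then have "(g' has_real_derivative
      ((1 - m) * g r powr (1 - m - 1) * g' r * h' r + g r powr (1 - m) * h'' r) / m) (at r)"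
    by (simp only: g'_eq[abs_def, symmetric])
  ultimately show ?thesis by (simp add: add_divide_distrib)
qed

lemma flux_pos:
  assumes "r \<ge> 0"
  shows "\<alpha> * g r + \<beta> * r * g' r > 0"
proof -
  define Q' where "Q' r = \<alpha> * g' r + \<beta> * g' r
      + \<beta> * r * ((1 - m) * (g' r)\<^sup>2 / g r + g r powr (1 - m) * h'' r / m)" for r
  have Q_deriv: "((\<lambda>r. \<alpha> * g r + \<beta> * r * g' r) has_real_derivative Q' r) (at r)" for r
    unfolding Q'_def by (auto intro!: derivative_eq_intros g_deriv g'_deriv)
  have "Q' r > 0" if "r > 0" and root: "\<alpha> * g r + \<beta> * r * g' r = 0" for r
  proof -
    have "(real n - 1) / m * (h'' r + (real n - 1) * h' r / r) = 0"
      using ode[OF \<open>r > 0\<close>] root by linarith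
    then have "h'' r = - ((real n - 1) / r * h' r)"
      using m_pos n_ge_3 by simp
    then have "g r powr (1 - m) * h'' r / m = - ((real n - 1) / r * (g r powr (1 - m) * h' r / m))"
      by (simp add: mult.left_commute)
    then have h''_term: "g r powr (1 - m) * h'' r / m = - ((real n - 1) * g' r / r)"
      unfolding g'_eq[symmetric] by simp
    have flux_root: "\<beta> * r * g' r = - (\<alpha> * g r)"
      using root by linarith
    have "\<beta> * r * ((1 - m) * (g' r)\<^sup>2 / g r) = (1 - m) * g' r * (\<beta> * r * g' r) / g r"
      by (simp add: power2_eq_square mult_ac)
    also have "\<dots> = (1 - m) * g' r * (- (\<alpha> * g r)) / g r"
      by (simp only: flux_root)
    also have "\<dots> = - ((1 - m) * \<alpha> * g' r)"
      using g_pos[of r] by simp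
    finally have g'_term: "\<beta> * r * ((1 - m) * (g' r)\<^sup>2 / g r) = - ((1 - m) * \<alpha> * g' r)" .
    have "Q' r = g' r * (m * \<alpha> - (real n - 2) * \<beta>)"
      unfolding Q'_def distrib_left g'_term h''_term using \<open>r > 0\<close> by (simp add: field_simps)
    also have "\<dots> > 0"
    proof (rule mult_neg_neg)
      have "\<beta> * r * g' r < 0" using flux_root \<alpha>_pos g_pos[of r] by simp
      then show "g' r < 0" using \<beta>_pos \<open>r > 0\<close> by (simp add: mult_less_0_iff)
      show "m * \<alpha> - (real n - 2) * \<beta> < 0" using m\<alpha>_lt by simp
    qed
    finally show ?thesis .
  qed
  then show ?thesis
    using positive_if_deriv_positive_at_roots[OF Q_deriv] \<alpha>_pos g_pos assms by simp
qed

definition w :: "real \<Rightarrow> real" where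
  "w r = r\<^sup>2 * g r powr (1 - m)"

definition elasticity :: "real \<Rightarrow> real" where
  "elasticity r = r * g' r / g r"

definition mass :: "real \<Rightarrow> real" where
  "mass r = - ((real n - 1) / m * (r ^ (n - 1) * h' r) + \<beta> * (r ^ n * g r)) / (\<alpha> - real n * \<beta>)"

definition z :: "real \<Rightarrow> real" where
  "z r = mass r / (r ^ (n - 2) * h r)"

lemma h_pos: "h r > 0"
  using g_pos[of r] by (simp add: h_eq)

lemma h'_div_h: "h' r / h r = m * g' r / g r"
proof -
  have "g r powr (m - 1) = g r powr m / g r"
    using g_pos[of r] by (simp add: powr_diff)
  then show ?thesis
    using g_pos[of r] by (simp add: h'_eq h_eq powr_minus_divide)
qed

lemma g_div_h: "g r / h r = g r powr (1 - m)"
  using g_pos[of r] by (simp add: h_eq powr_diff)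

lemma elasticity_gt:
  assumes "r > 0"
  shows "elasticity r > - \<alpha> / \<beta>"
proof -
  have "\<beta> * (r * g' r) > - \<alpha> * g r" using flux_pos[of r] assms by (simp add: mult.assoc)
  then show ?thesis
    unfolding elasticity_def using \<beta>_pos g_pos[of r] by (simp add: field_simps)
qed

lemma w_pos: "r > 0 \<Longrightarrow> w r > 0"
  unfolding w_def using g_pos[of r] by simp

lemma w_deriv:
  assumes "r > 0"
  shows "(w has_real_derivative w r / r * (2 + (1 - m) * elasticity r)) (at r)"
proof -
  have "(w has_real_derivative 2 * r * g r powr (1 - m) + r\<^sup>2 * ((1 - m) * g r powr (1 - m - 1) * g' r)) (at r)"
    unfolding w_def[abs_def]
    by (auto intro!: derivative_eq_intros DERIV_fun_powr[where g = g] g_deriv g_pos)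
  moreover have pm: "g r powr (1 - m - 1) = g r powr (1 - m) / g r"
    using powr_diff[of "g r" "1 - m" 1] g_pos[of r] by simp
  then have "2 * r * g r powr (1 - m) + r\<^sup>2 * ((1 - m) * g r powr (1 - m - 1) * g' r)
      = w r / r * (2 + (1 - m) * elasticity r)"
    unfolding w_def elasticity_def pm using assms g_pos[of r]
    by (simp add: field_simps power2_eq_square)
  ultimately show ?thesis by (rule DERIV_cong)
qed

lemma mass_deriv:
  assumes "r > 0"
  shows "(mass has_real_derivative r ^ (n - 1) * g r) (at r)"
proof -
  define P where "P = r ^ (n - 2)"
  have P: "r ^ (n - 1) = r * P" "r ^ n = r * r * P" "r ^ (n - 1 - 1) = P"
    unfolding P_def using power_n_split(1,2)[of r] by (simp_all add: numeral_2_eq_2)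
  have pow: "((\<lambda>r. r ^ j) has_real_derivative real j * r ^ (j - 1)) (at r)" for j
    using DERIV_pow[of j r] by simp
  have "((\<lambda>r. r ^ (n - 1) * h' r) has_real_derivative real (n - 1) * P * h' r + r * P * h'' r) (at r)"
    using DERIV_mult[OF pow[of "n - 1"] h'_deriv] unfolding P by (simp add: mult_ac)
  moreover have "((\<lambda>r. r ^ n * g r) has_real_derivative real n * (r * P) * g r + r * r * P * g' r) (at r)"
    using DERIV_mult[OF pow[of n] g_deriv] unfolding P by (simp add: mult_ac)
  ultimately have "(mass has_real_derivative
      - ((real n - 1) / m * (real (n - 1) * P * h' r + r * P * h'' r)
        + \<beta> * (real n * (r * P) * g r + r * r * P * g' r)) / (\<alpha> - real n * \<beta>)) (at r)"
    unfolding mass_def[abs_def] by (intro DERIV_cdivide DERIV_minus DERIV_add DERIV_cmult)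
  moreover have "(real n - 1) / m * (real (n - 1) * P * h' r + r * P * h'' r)
        + \<beta> * (real n * (r * P) * g r + r * r * P * g' r) = - (\<alpha> - real n * \<beta>) * (r * P * g r)"
  proof -
    have "(real n - 1) / m * (h'' r + (real n - 1) * h' r / r) = - (\<alpha> * g r + \<beta> * r * g' r)"
      using ode[OF assms] by linarith
    moreover have "real (n - 1) = real n - 1" using n_ge_3 by simp
    ultimately have "(real n - 1) / m * (real (n - 1) * h' r + r * h'' r)
        + \<beta> * (real n * r * g r + r * r * g' r) = - (\<alpha> - real n * \<beta>) * (r * g r)"
      using assms m_pos by (simp add: field_simps)
    from arg_cong[OF this, of "\<lambda>x. P * x"] show ?thesis
      by (simp add: algebra_simps)
  qed
  then have "- ((real n - 1) / m * (real (n - 1) * P * h' r + r * P * h'' r)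
        + \<beta> * (real n * (r * P) * g r + r * r * P * g' r)) / (\<alpha> - real n * \<beta>) = r ^ (n - 1) * g r"
    using \<alpha>_gt unfolding P by (simp add: field_simps)
  ultimately show ?thesis by (rule DERIV_cong)
qed

lemma mass_pos:
  assumes "r > 0"
  shows "mass r > 0"
proof -
  have "mass 0 = 0" unfolding mass_def power_n_split(1,2)[of 0] by simp
  moreover have "mass 0 < mass r"
  proof (rule DERIV_pos_imp_increasing_open[OF assms])
    fix x :: real assume "0 < x"
    then show "\<exists>y. (mass has_real_derivative y) (at x) \<and> y > 0"
      using mass_deriv g_pos[of x] by (intro exI[of _ "x ^ (n - 1) * g x"]) simp
  next
    have "continuous_on UNIV h'" "continuous_on UNIV g"
      using DERIV_isCont[OF h'_deriv] DERIV_isCont[OF g_deriv]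
      by (auto intro: continuous_at_imp_continuous_on)
    then show "continuous_on {0..r} mass"
      unfolding mass_def using m_pos \<alpha>_gt
      by (intro continuous_intros) (auto intro: continuous_on_subset)
  qed
  ultimately show ?thesis by simp
qed

lemma z_pos: "r > 0 \<Longrightarrow> z r > 0"
  unfolding z_def using mass_pos h_pos by simp

lemma z_identity:
  assumes "r > 0"
  shows "(\<alpha> - real n * \<beta>) * z r = - (real n - 1) * elasticity r - \<beta> * w r"
proof -
  define P where "P = r ^ (n - 2)"
  have P: "r ^ (n - 1) = r * P" "r ^ n = r * r * P"
    unfolding P_def using power_n_split[of r] by simp_all
  have "P > 0" unfolding P_def using assms by simp
  have "(\<alpha> - real n * \<beta>) * z r = - ((real n - 1) / m * r * (h' r / h r) + \<beta> * r\<^sup>2 * (g r / h r))"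
    unfolding z_def mass_def P P_def[symmetric]
    using \<alpha>_gt m_pos \<open>P > 0\<close> h_pos[of r] by (simp add: field_simps power2_eq_square)
  also have "\<dots> = - (real n - 1) * elasticity r - \<beta> * w r"
    unfolding h'_div_h g_div_h elasticity_def w_def using m_pos g_pos[of r] by (simp add: field_simps)
  finally show ?thesis .
qed

lemma z_deriv:
  assumes "r > 0"
  shows "(z has_real_derivative (w r + z r * (2 - real n - m * elasticity r)) / r) (at r)"
proof -
  define Q where "Q = r ^ (n - 3)"
  have Q: "r ^ (n - 1) = r * r * Q" "r ^ (n - 2) = r * Q"
    unfolding Q_def using power_n_split[of r] by simp_all
  have "Q > 0" unfolding Q_def using assms by simp
  have pow: "((\<lambda>r. r ^ (n - 2)) has_real_derivative real (n - 2) * Q) (at r)"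
    using DERIV_pow[of "n - 2" r] unfolding Q_def by (simp add: diff_diff_add)
  have "(z has_real_derivative
      (r ^ (n - 1) * g r * (r ^ (n - 2) * h r) - mass r * (real (n - 2) * Q * h r + h' r * r ^ (n - 2)))
      / (r ^ (n - 2) * h r * (r ^ (n - 2) * h r))) (at r)"
    unfolding z_def[abs_def] using assms h_pos[of r]
    by (intro DERIV_divide mass_deriv DERIV_mult pow h_deriv) simp_all
  moreover have "m * elasticity r = r * (h' r / h r)"
    unfolding h'_div_h elasticity_def by simp
  then have "(r ^ (n - 1) * g r * (r ^ (n - 2) * h r) - mass r * (real (n - 2) * Q * h r + h' r * r ^ (n - 2)))
      / (r ^ (n - 2) * h r * (r ^ (n - 2) * h r)) = (w r + z r * (2 - real n - m * elasticity r)) / r"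
    unfolding w_def z_def g_div_h[symmetric] Q using n_ge_3 assms \<open>Q > 0\<close> h_pos[of r]
    by (simp add: field_simps power2_eq_square of_nat_diff)
  ultimately show ?thesis by (rule DERIV_cong)
qed

definition \<delta> :: real where
  "\<delta> = real n - 2 - m * \<alpha> / \<beta>"

lemma \<delta>_pos: "\<delta> > 0"
  unfolding \<delta>_def using m\<alpha>_lt \<beta>_pos by (simp add: field_simps)

lemma z_eventually_less:
  assumes "\<epsilon> > 0" and "\<forall>\<^sub>F r in at_top. w r < \<epsilon>"
  shows "\<forall>\<^sub>F r in at_top. z r < 2 * \<epsilon> / \<delta>"
proof -
  obtain R where R: "\<And>r. r \<ge> R \<Longrightarrow> w r < \<epsilon> \<and> r \<ge> 1"
    using eventually_conj[OF assms(2) eventually_ge_at_top[of 1]]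
    unfolding eventually_at_top_linorder by blast
  then have "R \<ge> 1" by blast
  show ?thesis
  proof (rule eventually_less_if_deriv_le_linear[OF \<delta>_pos, of R])
    fix r assume "r \<ge> R"
    then have "r > 0" using \<open>R \<ge> 1\<close> by simp
    show "(z has_real_derivative (w r + z r * (2 - real n - m * elasticity r)) / r) (at r)"
      using z_deriv[OF \<open>r > 0\<close>] .
    have "m * elasticity r > - m * \<alpha> / \<beta>"
      using elasticity_gt[OF \<open>r > 0\<close>] m_pos mult_strict_left_mono by fastforce
    then have "2 - real n - m * elasticity r \<le> - \<delta>"
      unfolding \<delta>_def by simp
    then have "z r * (2 - real n - m * elasticity r) \<le> - \<delta> * z r"
      using mult_left_mono[OF _ less_imp_le[OF z_pos[OF \<open>r > 0\<close>]]]
      by (metis mult.commute mult_minus_left)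
    then show "r * ((w r + z r * (2 - real n - m * elasticity r)) / r) \<le> \<epsilon> - \<delta> * z r"
      using R[OF \<open>r \<ge> R\<close>] \<open>r > 0\<close> by simp
  qed (use \<open>R \<ge> 1\<close> \<delta>_pos \<open>\<epsilon> > 0\<close> in \<open>auto simp: divide_strict_right_mono\<close>)
qed

lemma w_eventually_nondecreasing:
  assumes "\<forall>\<^sub>F r in at_top. 2 + (1 - m) * elasticity r > 0"
  obtains R where "R > 0" and "\<And>r. r \<ge> R \<Longrightarrow> w R \<le> w r"
proof -
  obtain R where R: "\<And>r. r \<ge> R \<Longrightarrow> 2 + (1 - m) * elasticity r > 0 \<and> r \<ge> 1"
    using eventually_conj[OF assms eventually_ge_at_top[of 1]]
    unfolding eventually_at_top_linorder by blast
  then have "R > 0" by fastforce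
  have "w R \<le> w r" if "r \<ge> R" for r
  proof (rule DERIV_nonneg_imp_nondecreasing[OF that])
    fix x assume "R \<le> x"
    then have "x > 0" using \<open>R > 0\<close> by simp
    then show "\<exists>y. (w has_real_derivative y) (at x) \<and> y \<ge> 0"
      using w_deriv[OF \<open>x > 0\<close>] w_pos[OF \<open>x > 0\<close>] R[OF \<open>R \<le> x\<close>]
      by (intro exI[of _ "w x / x * (2 + (1 - m) * elasticity x)"]) simp
  qed
  with \<open>R > 0\<close> show ?thesis by (rule that)
qed

theorem frequently_w_ge: "\<exists>\<epsilon> > 0. \<exists>\<^sub>F r in at_top. \<epsilon> \<le> w r"
proof (rule ccontr)
  assume "\<not> ?thesis"
  then have w_small: "\<forall>\<^sub>F r in at_top. w r < \<epsilon>" if "\<epsilon> > 0" for \<epsilon>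
    using that by (auto simp: not_frequently not_le)
  have \<alpha>n\<beta>: "\<alpha> - real n * \<beta> > 0" using \<alpha>_gt by simp
  \<comment> \<open>Chosen so that \<open>w < \<epsilon>\<close> and \<open>z < 2\<epsilon>/\<delta>\<close> give \<open>-(n - 1) elasticity < (n - 1)/(1 - m)\<close>.\<close>
  define \<epsilon> where "\<epsilon> = (real n - 1) / (1 - m) / (\<beta> + 2 * (\<alpha> - real n * \<beta>) / \<delta>)"
  have denom_pos: "\<beta> + 2 * (\<alpha> - real n * \<beta>) / \<delta> > 0"
    using \<beta>_pos \<alpha>n\<beta> \<delta>_pos by (simp add: add_pos_pos)
  have "\<epsilon> > 0" unfolding \<epsilon>_def using n_ge_3 m_lt_1 denom_pos by simp
  have "\<beta> * \<epsilon> + (\<alpha> - real n * \<beta>) * (2 * \<epsilon> / \<delta>) = \<epsilon> * (\<beta> + 2 * (\<alpha> - real n * \<beta>) / \<delta>)"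
    by (simp add: algebra_simps)
  also have "\<dots> = (real n - 1) / (1 - m)"
    unfolding \<epsilon>_def using denom_pos by simp
  finally have \<epsilon>_eq: "\<beta> * \<epsilon> + (\<alpha> - real n * \<beta>) * (2 * \<epsilon> / \<delta>) = (real n - 1) / (1 - m)" .
  have "\<forall>\<^sub>F r in at_top. 2 + (1 - m) * elasticity r > 0"
    using z_eventually_less[OF \<open>\<epsilon> > 0\<close> w_small[OF \<open>\<epsilon> > 0\<close>]] w_small[OF \<open>\<epsilon> > 0\<close>]
      eventually_gt_at_top[of 0]
  proof eventually_elim
    case (elim r)
    have "- (real n - 1) * elasticity r = (\<alpha> - real n * \<beta>) * z r + \<beta> * w r"
      using z_identity[OF \<open>r > 0\<close>] by simp
    also have "\<dots> < (\<alpha> - real n * \<beta>) * (2 * \<epsilon> / \<delta>) + \<beta> * \<epsilon>"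
      using elim \<alpha>n\<beta> \<beta>_pos by (intro add_strict_mono mult_strict_left_mono) simp_all
    finally have "(real n - 1) * (- elasticity r) < (real n - 1) * (1 / (1 - m))"
      using \<epsilon>_eq by (simp add: algebra_simps)
    moreover have "real n - 1 > 0" using n_ge_3 by simp
    ultimately have "- elasticity r < 1 / (1 - m)"
      using mult_less_cancel_left_pos by blast
    then show ?case using m_lt_1 by (simp add: field_simps)
  qed
  then obtain R where "R > 0" and w_mono: "\<And>r. r \<ge> R \<Longrightarrow> w R \<le> w r"
    using w_eventually_nondecreasing by blast
  obtain r where "r \<ge> R" "w r < w R"
    using eventually_conj[OF w_small[OF w_pos[OF \<open>R > 0\<close>]] eventually_ge_at_top[of R]]
    unfolding eventually_at_top_linorder by blast
  with w_mono show False by force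
qed

end

lemma fast_diffusion_exponents:
  fixes n m \<rho> \<alpha> \<beta> :: real
  assumes "n \<ge> 3" and "0 < m" and "m < (n - 2) / n" and "\<rho> > 0"
    and \<alpha>_def: "\<alpha> = (2 * \<beta> + \<rho>) / (1 - m)"
    and \<beta>_gt: "\<beta> > m * \<rho> / (n - 2 - m * n)"
  shows "\<beta> > 0" and "m * \<alpha> < (n - 2) * \<beta>"
    and "2 * (n - 1) * (n * (1 - m) - 2) / ((1 - m) * (\<alpha> * (1 - m) - 2 * \<beta>)) > 0"
proof -
  have "m * n < n - 2" using assms(1,3) by (simp add: field_simps)
  then have "n - 2 - m * n > 0" and "m < 1"
    using assms(1,2) by (simp, smt (verit) mult_le_cancel_right1)
  then show "\<beta> > 0"
    using \<beta>_gt assms(2,4) by (smt (verit) divide_pos_pos mult_pos_pos)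
  have \<alpha>_1m: "\<alpha> * (1 - m) = 2 * \<beta> + \<rho>" unfolding \<alpha>_def using \<open>m < 1\<close> by simp
  have "m * \<alpha> * (1 - m) = m * (2 * \<beta> + \<rho>)" using \<alpha>_1m by simp
  also have "\<dots> < (n - 2) * \<beta> * (1 - m)"
    using \<beta>_gt \<open>n - 2 - m * n > 0\<close> by (simp add: field_simps)
  finally show "m * \<alpha> < (n - 2) * \<beta>" using \<open>m < 1\<close> by simp
  have "\<alpha> * (1 - m) - 2 * \<beta> = \<rho>" using \<alpha>_1m by simp
  moreover have "n * (1 - m) - 2 > 0" using \<open>m * n < n - 2\<close> by (simp add: algebra_simps)
  ultimately show "2 * (n - 1) * (n * (1 - m) - 2) / ((1 - m) * (\<alpha> * (1 - m) - 2 * \<beta>)) > 0"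
    using \<open>m < 1\<close> assms(1,4) by (intro divide_pos_pos mult_pos_pos) auto
qed

theorem lemma3p3:
  fixes v :: "'a::euclidean_space \<Rightarrow> real"
    and m \<rho> \<alpha> \<beta> :: real
  defines "n \<equiv> real DIM('a)"
  assumes dim: "DIM('a) \<ge> 3"
    and m_pos: "0 < m" and m_lt: "m < (n - 2) / n"
    and rho_pos: "\<rho> > 0"
    and alpha_def: "\<alpha> = (2 * \<beta> + \<rho>) / (1 - m)"
    and beta_gt: "\<beta> > m * \<rho> / (n - 2 - m * n)"
    and alpha_gt: "\<alpha> > n * \<beta>"
    and v_pos: "\<forall>x. v x > 0"
    and v_rad: "radially_symmetric v"
    and v_C2: "C2 v"
    and vm_C2: "C2 (\<lambda>x. v x powr m)"
    and eqn: "\<forall>x. (n - 1) / m * laplacian (\<lambda>y. v y powr m) x + \<alpha> * v x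
                    + \<beta> * (x \<bullet> grad v x) = 0"
  shows "\<exists>\<epsilon>. 0 < \<epsilon> \<and> \<epsilon> < min 1
            ((2 * (n - 1) * (n * (1 - m) - 2)) / ((1 - m) * (\<alpha> * (1 - m) - 2 * \<beta>)) / 2) \<and>
          (\<forall>R0 > 1. \<exists>r'. r' > R0 \<and> r'^2 * radval v r' powr (1 - m) \<ge> \<epsilon>)"
proof -
  define w_inf where "w_inf = 2 * (n - 1) * (n * (1 - m) - 2) / ((1 - m) * (\<alpha> * (1 - m) - 2 * \<beta>))"
  have "n \<ge> 3" unfolding n_def using dim by simp
  note exponents = fast_diffusion_exponents[OF this m_pos m_lt rho_pos alpha_def beta_gt]
  interpret fast_diffusion_profile "DIM('a)" m \<alpha> \<beta> "radval v" "deriv (radval v)"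
      "\<lambda>r. radval v r powr m" "deriv (\<lambda>r. radval v r powr m)" "deriv (deriv (\<lambda>r. radval v r powr m))"
    using radial_profile_ode[OF v_rad v_C2 vm_C2 eqn[unfolded n_def]] dim m_pos exponents(1,2)
      alpha_gt v_pos unfolding n_def by unfold_locales (auto simp: radval_def)
  obtain \<epsilon> where "\<epsilon> > 0" and often: "\<exists>\<^sub>F r in at_top. \<epsilon> \<le> w r"
    using frequently_w_ge by blast
  have "w_inf > 0" unfolding w_inf_def by (rule exponents(3))
  show ?thesis unfolding w_inf_def[symmetric]
  proof (rule exI[of _ "min (min \<epsilon> 1) (w_inf / 2) / 2"], intro conjI allI impI)
    show "0 < min (min \<epsilon> 1) (w_inf / 2) / 2" and "min (min \<epsilon> 1) (w_inf / 2) / 2 < min 1 (w_inf / 2)"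
      using \<open>\<epsilon> > 0\<close> \<open>w_inf > 0\<close> by auto
    fix R0 :: real
    obtain r where "r > R0" "\<epsilon> \<le> w r"
      using frequently_ex[OF frequently_eventually_frequently[OF often eventually_gt_at_top[of R0]]]
      by blast
    then show "\<exists>r' > R0. min (min \<epsilon> 1) (w_inf / 2) / 2 \<le> r'\<^sup>2 * radval v r' powr (1 - m)"
      using \<open>\<epsilon> > 0\<close> unfolding w_def by (intro exI[of _ r]) auto
  qed
qed

end
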